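(* Consider a degree-corrected stochastic block model with $K$ communities, membership matrix $\Theta\in\mathbb M_{n,K}$ (every community nonempty), symmetric $B\in[0,1]^{K\times K}$ with $\mathrm{rank}(B)=K'<K$, and node propensities $\vartheta\in\mathbb R^n_{+}$ with $\max_{i\in G_k}\vartheta_i=1$ for each $k$. Let $P=\mathrm{diag}(\vartheta)\Theta B\Theta^\intercal\mathrm{diag}(\vartheta)=U\Sigma U^\intercal$ be its eigenvalue decomposition with $U\in\mathbb R^{n\times K'}$. Let $\phi_k\in\mathbb R^n$ agree with $\vartheta$ on $G_k$ and be zero elsewhere, $\Omega=\mathrm{diag}(\|\phi_1\|_2,\dots,\|\phi_K\|_2)$, $\bar B=\Omega B\Omega$, and $\bar B=HDH^\intercal$ its eigenvalue decomposition with $H\in\mathbb R^{K\times K'}$. Suppose there exist deterministic positive sequences $\{\eta'_n\},\{\underline\iota_n\},\{\overline\iota_n\},\{\beta_n\}$ such that $\min_{1\le k<l\le K}\bar B_{kk}\bar B_{ll}-\bar B_{kl}^2\ge\eta'_n>0$, $0<\underline\iota_n<\Sigma_{ii}<\overline\iota_n$ for all $1\le i\le K'$, and $0<\min_k\bar B_{kk}\le\max_k\bar B_{kk}\le\beta_n$. Then $$\max_{k\ne l}\cos(H_{k\ast},H_{l\ast})\le\xi'_n\quad\text{with}\quad\xi'_n=\sqrt{1-\frac{\eta'_n}{\overline\iota_n\beta_n^2/\underline\iota_n}}.$$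
   Context: $\mathbb M_{n,K}$: $n\times K$ 0/1 matrices with exactly one $1$ per row; $G_k$ is the set of nodes whose row has its $1$ in column $k$. $M_{k\ast}$ denotes the $k$-th row. $\cos(a,b)=a^\intercal b/(\|a\|_2\|b\|_2)$. *)

theory Defs
  imports "HOL-Analysis.Analysis"
begin

definition membership_matrix :: "real^'K^'n \<Rightarrow> bool" where
  "membership_matrix Th \<longleftrightarrow> (\<forall>i k. Th$i$k = 0 \<or> Th$i$k = 1) \<and> (\<forall>i. \<exists>!k. Th$i$k = 1)"

definition community :: "real^'K^'n \<Rightarrow> 'K \<Rightarrow> 'n set" where
  "community Th k = {i. Th$i$k = 1}"

definition diag_mat :: "real^'n \<Rightarrow> real^'n^'n" where
  "diag_mat v = (\<chi> i j. if i = j then v$i else 0)"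

definition is_diag :: "real^'n^'n \<Rightarrow> bool" where
  "is_diag M \<longleftrightarrow> (\<forall>i j. i \<noteq> j \<longrightarrow> M$i$j = 0)"

definition cosine :: "real^'a \<Rightarrow> real^'a \<Rightarrow> real" where
  "cosine a b = (a \<bullet> b) / (norm a * norm b)"

definition phi_vec :: "real^'K^'n \<Rightarrow> real^'n \<Rightarrow> 'K \<Rightarrow> real^'n" where
  "phi_vec Th th k = (\<chi> i. if i \<in> community Th k then th$i else 0)"

definition Omega_mat :: "real^'K^'n \<Rightarrow> real^'n \<Rightarrow> real^'K^'K" where
  "Omega_mat Th th = diag_mat (\<chi> k. norm (phi_vec Th th k))"

definition Bbar :: "real^'K^'n \<Rightarrow> real^'n \<Rightarrow> real^'K^'K \<Rightarrow> real^'K^'K" where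
  "Bbar Th th B = Omega_mat Th th ** B ** Omega_mat Th th"

end

theory Submission
  imports Defs
begin

(*
  The columns phi_k of Phi = diag(theta) Theta have disjoint supports, so Q = Phi Omega^-1 has
  orthonormal columns and P = Q Bbar Q^T. An eigenvector H e_i of Bbar is therefore carried to the
  eigenvector Q H e_i of P with the same eigenvalue D_ii, which is nonzero because
  rank Bbar = rank B = K'; hence D_ii is some Sigma_jj and lies between iota_lo and iota_hi.
  Now Bbar_kl = <H_k, D H_l> is a weighted inner product comparable to the Euclidean one.
  Shearing y = H_l against x = H_k with t = <x, y> / |x|^2 changes the Gram determinant only by a
  nonnegative square, so
    eta' <= Bbar_kk <y - t x, D (y - t x)> <= beta iota_hi |y|^2 (1 - cos^2)
         <= beta^2 (iota_hi / iota_lo) (1 - cos^2).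
*)

lemma is_diag_eq_diag_mat: "is_diag D \<longleftrightarrow> D = diag_mat (\<chi> i. D$i$i)"
  by (auto simp: is_diag_def diag_mat_def vec_eq_iff)

lemma matrix_mult_diag_mat_nth: "(A ** diag_mat v)$i$j = A$i$j * v$j"
proof -
  have "(\<Sum>k\<in>UNIV. A$i$k * diag_mat v$k$j) = (\<Sum>k\<in>UNIV. if k = j then A$i$j * v$j else 0)"
    by (intro sum.cong) (auto simp: diag_mat_def)
  then show ?thesis by (simp add: matrix_matrix_mult_def)
qed

lemma diag_mat_mult_matrix_nth: "(diag_mat v ** A)$i$j = v$i * A$i$j"
proof -
  have "(\<Sum>k\<in>UNIV. diag_mat v$i$k * A$k$j) = (\<Sum>k\<in>UNIV. if k = i then v$i * A$i$j else 0)"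
    by (intro sum.cong) (auto simp: diag_mat_def)
  then show ?thesis by (simp add: matrix_matrix_mult_def)
qed

lemma diag_mat_mult_vector: "diag_mat v *v w = v * w"
proof -
  have "(\<Sum>k\<in>UNIV. diag_mat v$i$k * w$k) = (\<Sum>k\<in>UNIV. if k = i then v$i * w$i else 0)" for i
    by (intro sum.cong) (auto simp: diag_mat_def)
  then show ?thesis by (simp add: matrix_vector_mult_def vec_eq_iff)
qed

lemma diag_mat_mult: "diag_mat a ** diag_mat b = diag_mat (a * b)"
  by (simp add: vec_eq_iff matrix_mult_diag_mat_nth) (simp add: diag_mat_def)

lemma diag_mat_one: "diag_mat 1 = mat 1"
  by (simp add: vec_eq_iff mat_def diag_mat_def)

lemma transpose_diag_mat: "transpose (diag_mat v) = diag_mat v"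
  by (simp add: vec_eq_iff transpose_def diag_mat_def)

lemma diag_mat_mult_inverse:
  assumes "\<forall>i. v$i \<noteq> 0"
  shows "diag_mat v ** diag_mat (\<chi> i. inverse (v$i)) = mat 1"
    and "diag_mat (\<chi> i. inverse (v$i)) ** diag_mat v = mat 1"
proof -
  have "v * (\<chi> i. inverse (v$i)) = 1" using assms by (simp add: vec_eq_iff)
  then show "diag_mat v ** diag_mat (\<chi> i. inverse (v$i)) = mat 1"
    and "diag_mat (\<chi> i. inverse (v$i)) ** diag_mat v = mat 1"
    by (simp_all add: diag_mat_mult diag_mat_one mult.commute)
qed

lemma diag_mat_eigenvalue:
  assumes "diag_mat v *v w = c *s w" and "w \<noteq> 0"
  shows "\<exists>j. v$j = c"
proof -
  obtain j where "w$j \<noteq> 0" using \<open>w \<noteq> 0\<close> by (auto simp: vec_eq_iff)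
  moreover have "v$j * w$j = c * w$j"
    using assms(1) by (simp add: diag_mat_mult_vector vec_eq_iff)
  ultimately show ?thesis by auto
qed

lemma rank_diag_mat_less:
  fixes v :: "real^'n"
  assumes "v$i = 0"
  shows "rank (diag_mat v) < CARD('n)"
proof -
  have "diag_mat v *v axis i 1 = 0"
    using assms by (simp add: diag_mat_mult_vector vec_eq_iff axis_def)
  then have "rank (diag_mat v) \<noteq> CARD('n)"
    using matrix_nonfull_linear_equations_eq axis_eq_0_iff by (metis zero_neq_one)
  then show ?thesis using rank_bound[of "diag_mat v"] by simp
qed

lemma quadratic_form_diag_mat_lower:
  assumes "\<forall>i. lo \<le> v$i"
  shows "lo * (x \<bullet> x) \<le> x \<bullet> (diag_mat v *v x)"
proof -
  have "lo * (x$i * x$i) \<le> x$i * (v$i * x$i)" for i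
    using assms mult_right_mono[of lo "v$i" "x$i * x$i"] by (simp add: algebra_simps)
  then show ?thesis
    unfolding diag_mat_mult_vector inner_vec_def sum_distrib_left by (intro sum_mono) simp
qed

lemma quadratic_form_diag_mat_upper:
  assumes "\<forall>i. v$i \<le> hi"
  shows "x \<bullet> (diag_mat v *v x) \<le> hi * (x \<bullet> x)"
proof -
  have "x$i * (v$i * x$i) \<le> hi * (x$i * x$i)" for i
    using assms mult_right_mono[of "v$i" hi "x$i * x$i"] by (simp add: algebra_simps)
  then show ?thesis
    unfolding diag_mat_mult_vector inner_vec_def sum_distrib_left by (intro sum_mono) simp
qed

lemma matrix_mult_transpose_nth: "(A ** M ** transpose A)$k$l = A$k \<bullet> (M *v A$l)"
proof -
  have "(A ** M ** transpose A)$k$l = (\<Sum>j\<in>UNIV. \<Sum>i\<in>UNIV. A$k$i * M$i$j * A$l$j)"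
    by (simp add: matrix_matrix_mult_def transpose_def sum_distrib_right)
  also have "\<dots> = (\<Sum>i\<in>UNIV. \<Sum>j\<in>UNIV. A$k$i * (M$i$j * A$l$j))"
    by (subst sum.swap) (simp add: mult.assoc)
  also have "\<dots> = A$k \<bullet> (M *v A$l)"
    by (simp add: matrix_vector_mult_def inner_vec_def sum_distrib_left)
  finally show ?thesis .
qed

lemma power2_norm_reject:
  fixes x y :: "real^'n"
  shows "norm (y - ((x \<bullet> y) / (x \<bullet> x)) *\<^sub>R x)^2 = norm y ^ 2 * (1 - (cosine x y)^2)"
proof (cases "x = 0 \<or> y = 0")
  case True
  then show ?thesis by (auto simp: cosine_def)
next
  case False
  then have nx: "x \<bullet> x > 0" by simp
  have "norm (y - ((x \<bullet> y) / (x \<bullet> x)) *\<^sub>R x)^2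
      = y \<bullet> y - 2 * ((x \<bullet> y) / (x \<bullet> x)) * (x \<bullet> y) + ((x \<bullet> y) / (x \<bullet> x))^2 * (x \<bullet> x)"
    unfolding power2_norm_eq_inner
    by (simp add: inner_diff_left inner_diff_right inner_commute[of y x] power2_eq_square algebra_simps)
  also have "\<dots> = y \<bullet> y - (x \<bullet> y)^2 / (x \<bullet> x)"
    using nx by (simp add: field_simps power2_eq_square)
  also have "\<dots> = norm y ^ 2 * (1 - (cosine x y)^2)"
    using False by (simp add: cosine_def power_divide power_mult_distrib power2_norm_eq_inner field_simps)
  finally show ?thesis .
qed

lemma inner_matrix_vector_symmetric:
  fixes M :: "real^'n^'n"
  assumes "transpose M = M"
  shows "y \<bullet> (M *v x) = x \<bullet> (M *v y)"
proof -
  have "M *v x = x v* M" using transpose_matrix_vector[of M x] unfolding assms .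
  then have "y \<bullet> (M *v x) = (x v* M) \<bullet> y" by (simp add: inner_commute)
  also have "\<dots> = x \<bullet> (M *v y)" by (rule dot_lmul_matrix)
  finally show ?thesis .
qed

lemma gram_det_le_shear:
  fixes M :: "real^'n^'n" and x y :: "real^'n" and t :: real
  assumes "transpose M = M"
  defines "z \<equiv> y - t *\<^sub>R x"
  shows "x \<bullet> (M *v x) * (y \<bullet> (M *v y)) - (x \<bullet> (M *v y))^2 \<le> x \<bullet> (M *v x) * (z \<bullet> (M *v z))"
proof -
  have zz: "z \<bullet> (M *v z) = y \<bullet> (M *v y) - 2 * t * (x \<bullet> (M *v y)) + t^2 * (x \<bullet> (M *v x))"
    using inner_matrix_vector_symmetric[OF assms(1), of y x]
    by (simp add: z_def matrix_vector_mult_diff_distrib matrix_vector_mult_scaleR inner_diff_left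
        inner_diff_right power2_eq_square algebra_simps)
  have "x \<bullet> (M *v x) * (z \<bullet> (M *v z))
      = (x \<bullet> (M *v x) * (y \<bullet> (M *v y)) - (x \<bullet> (M *v y))^2) + (x \<bullet> (M *v y) - t * (x \<bullet> (M *v x)))^2"
    unfolding zz by (simp add: power2_eq_square algebra_simps)
  then show ?thesis by simp
qed

lemma power2_cosine_le_1: "(cosine x y)^2 \<le> 1"
proof -
  have "\<bar>x \<bullet> y\<bar> \<le> norm x * norm y" by (rule Cauchy_Schwarz_ineq2)
  then have "\<bar>cosine x y\<bar> \<le> 1"
    unfolding cosine_def by (cases "x = 0 \<or> y = 0") (auto simp: abs_mult divide_le_eq_1)
  then show ?thesis by (metis abs_le_square_iff abs_one power_one)
qed

lemma cosine_le_of_gram_det: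
  fixes x y :: "real^'n" and M :: "real^'n^'n"
  assumes M_sym: "transpose M = M"
    and M_lower: "\<And>v. lo * (v \<bullet> v) \<le> v \<bullet> (M *v v)"
    and M_upper: "\<And>v. v \<bullet> (M *v v) \<le> hi * (v \<bullet> v)"
    and lo: "lo > 0"
    and gram: "eta \<le> x \<bullet> (M *v x) * (y \<bullet> (M *v y)) - (x \<bullet> (M *v y))^2"
    and Mx: "0 < x \<bullet> (M *v x)" "x \<bullet> (M *v x) \<le> beta"
    and My: "y \<bullet> (M *v y) \<le> beta"
  shows "cosine x y \<le> sqrt (1 - eta / (hi * beta^2 / lo))"
proof -
  define c where "c = cosine x y"
  define z where "z = y - ((x \<bullet> y) / (x \<bullet> x)) *\<^sub>R x"
  have hi: "hi > 0"
    using M_upper[of x] Mx(1) by (smt (verit) inner_ge_zero mult_nonpos_nonneg)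
  have beta: "beta > 0" using Mx by simp
  have z_nonneg: "0 \<le> z \<bullet> (M *v z)"
    using M_lower[of z] lo by (smt (verit) inner_ge_zero mult_nonneg_nonneg)
  have y_le: "y \<bullet> y \<le> beta / lo"
    using M_lower[of y] My lo by (simp add: field_simps)
  have "eta \<le> x \<bullet> (M *v x) * (z \<bullet> (M *v z))"
    using gram gram_det_le_shear[OF M_sym, of x y "(x \<bullet> y) / (x \<bullet> x)"] unfolding z_def by simp
  also have "\<dots> \<le> beta * (hi * (z \<bullet> z))"
    using Mx(2) M_upper[of z] z_nonneg beta by (simp add: mult_mono)
  also have "z \<bullet> z = (y \<bullet> y) * (1 - c^2)"
    using power2_norm_reject[of y x] by (simp add: power2_norm_eq_inner z_def c_def)
  also have "beta * (hi * ((y \<bullet> y) * (1 - c^2))) \<le> beta * (hi * ((beta / lo) * (1 - c^2)))"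
    using y_le power2_cosine_le_1[of x y] hi beta unfolding c_def
    by (intro mult_left_mono mult_right_mono) simp_all
  finally have "eta / (hi * beta^2 / lo) \<le> 1 - c^2"
    using hi beta lo by (simp add: pos_divide_le_eq power2_eq_square field_simps)
  then show ?thesis unfolding c_def by (intro real_le_rsqrt) simp
qed

lemma column_eigenvector_of_eigendecomposition:
  fixes H :: "real^'r^'k" and d :: "real^'r"
  assumes H_orth: "transpose H ** H = mat 1"
  shows "(H ** diag_mat d ** transpose H) *v column i H = d$i *s column i H"
    and "column i H \<noteq> 0"
proof -
  have "diag_mat d *v axis i 1 = d$i *s axis i 1"
    by (simp add: diag_mat_mult_vector vec_eq_iff axis_def)
  moreover have "(H ** diag_mat d ** transpose H) *v (H *v axis i 1)
      = H *v (diag_mat d *v ((transpose H ** H) *v axis i 1))"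
    by (simp only: matrix_vector_mul_assoc matrix_mul_assoc)
  ultimately show "(H ** diag_mat d ** transpose H) *v column i H = d$i *s column i H"
    by (simp add: H_orth vector_scalar_commute flip: matrix_vector_mult_basis)
  have "transpose H *v (H *v axis i 1) = axis i 1"
    by (simp only: matrix_vector_mul_assoc H_orth matrix_vector_mul_lid)
  then show "column i H \<noteq> 0"
    by (metis axis_eq_0_iff matrix_vector_mult_0_right matrix_vector_mult_basis zero_neq_one)
qed

lemma eigenvector_of_compression:
  fixes Q :: "real^'k^'n" and M :: "real^'k^'k"
  assumes Q_orth: "transpose Q ** Q = mat 1"
    and eig: "M *v h = c *s h" and "h \<noteq> 0"
  shows "(Q ** M ** transpose Q) *v (Q *v h) = c *s (Q *v h)"
    and "Q *v h \<noteq> 0"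
proof -
  have "(Q ** M ** transpose Q) *v (Q *v h) = Q *v (M *v ((transpose Q ** Q) *v h))"
    by (simp only: matrix_vector_mul_assoc matrix_mul_assoc)
  then show "(Q ** M ** transpose Q) *v (Q *v h) = c *s (Q *v h)"
    by (simp add: Q_orth eig vector_scalar_commute)
  have "transpose Q *v (Q *v h) = h"
    by (simp only: matrix_vector_mul_assoc Q_orth matrix_vector_mul_lid)
  then show "Q *v h \<noteq> 0" using \<open>h \<noteq> 0\<close> by auto
qed

lemma eigenvalue_of_eigendecomposition:
  fixes U :: "real^'r^'n" and s :: "real^'r"
  assumes U_orth: "transpose U ** U = mat 1"
    and eig: "(U ** diag_mat s ** transpose U) *v v = c *s v" and "v \<noteq> 0" and "c \<noteq> 0"
  shows "\<exists>j. s$j = c"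
proof -
  define w where "w = transpose U *v v"
  define w' where "w' = (1 / c) *s (diag_mat s *v w)"
  have "U *v (diag_mat s *v w) = c *s v"
    using eig unfolding w_def by (simp only: matrix_vector_mul_assoc matrix_mul_assoc)
  then have v_eq: "v = U *v w'"
    using \<open>c \<noteq> 0\<close> by (simp add: w'_def vector_scalar_commute vector_smult_assoc)
  then have "w = w'"
    unfolding w_def by (simp only: matrix_vector_mul_assoc U_orth matrix_vector_mul_lid)
  then have "c *s w = c *s w'" by (rule arg_cong)
  then have "diag_mat s *v w = c *s w"
    using \<open>c \<noteq> 0\<close> by (simp add: w'_def vector_smult_assoc)
  moreover have "w \<noteq> 0" using v_eq \<open>v \<noteq> 0\<close> \<open>w = w'\<close> by auto
  ultimately show ?thesis by (rule diag_mat_eigenvalue)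
qed

lemma eigenvalue_of_compressed_eigendecomposition:
  fixes H :: "real^'r^'k" and Q :: "real^'k^'n" and U :: "real^'q^'n"
  assumes "transpose H ** H = mat 1" and "transpose Q ** Q = mat 1" and "transpose U ** U = mat 1"
    and "Q ** (H ** diag_mat d ** transpose H) ** transpose Q = U ** diag_mat s ** transpose U"
    and "d$i \<noteq> 0"
  shows "\<exists>j. s$j = d$i"
proof -
  have "(H ** diag_mat d ** transpose H) *v column i H = d$i *s column i H" "column i H \<noteq> 0"
    using column_eigenvector_of_eigendecomposition[OF assms(1)] by blast+
  then have "(U ** diag_mat s ** transpose U) *v (Q *v column i H) = d$i *s (Q *v column i H)"
    and "Q *v column i H \<noteq> 0"
    using eigenvector_of_compression[OF assms(2)] assms(4) by metis+
  then show ?thesis using eigenvalue_of_eigendecomposition[OF assms(3)] assms(5) by blast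
qed

lemma transpose_mult_self_nth: "(transpose A ** A)$k$l = column k A \<bullet> column l A"
  by (simp add: matrix_matrix_mult_def transpose_def column_def inner_vec_def)

lemma column_diag_mat_mult_membership:
  assumes "membership_matrix Th"
  shows "column k (diag_mat th ** Th) = phi_vec Th th k"
proof -
  have "Th$i$k = 0 \<or> Th$i$k = 1" for i
    using assms by (simp add: membership_matrix_def)
  then show ?thesis
    by (auto simp: vec_eq_iff column_def phi_vec_def community_def diag_mat_mult_matrix_nth)
qed

lemma phi_vec_orthogonal:
  assumes "membership_matrix Th" and "k \<noteq> l"
  shows "phi_vec Th th k \<bullet> phi_vec Th th l = 0"
proof -
  have "community Th k \<inter> community Th l = {}"
    using assms unfolding membership_matrix_def community_def by blast
  then have "phi_vec Th th k $ i * phi_vec Th th l $ i = 0" for i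
    by (auto simp: phi_vec_def)
  then show ?thesis unfolding inner_vec_def inner_real_def by (intro sum.neutral) blast
qed

lemma phi_vec_nonzero:
  assumes "community Th k \<noteq> {}" and "\<forall>i. th$i > 0"
  shows "phi_vec Th th k \<noteq> 0"
proof -
  obtain i where "i \<in> community Th k" using assms(1) by blast
  then have "phi_vec Th th k $ i > 0" using assms(2) by (simp add: phi_vec_def)
  then show ?thesis by auto
qed

lemma transpose_mult_self_membership:
  assumes "membership_matrix Th"
  shows "transpose (diag_mat th ** Th) ** (diag_mat th ** Th) = Omega_mat Th th ** Omega_mat Th th"
proof -
  have "(transpose (diag_mat th ** Th) ** (diag_mat th ** Th))$k$l
      = (if k = l then norm (phi_vec Th th k) * norm (phi_vec Th th k) else 0)" for k l
    using phi_vec_orthogonal[OF assms]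
    by (simp add: transpose_mult_self_nth column_diag_mat_mult_membership[OF assms] norm_eq_sqrt_inner)
  then show ?thesis
    unfolding Omega_mat_def diag_mat_mult by (simp add: vec_eq_iff diag_mat_def)
qed

lemma Bbar_orthonormal_compression:
  assumes memb: "membership_matrix Th"
    and nonempty: "\<forall>k. community Th k \<noteq> {}" and th_pos: "\<forall>i. th$i > 0"
  shows "\<exists>Q. transpose Q ** Q = mat 1
    \<and> Q ** Bbar Th th B ** transpose Q = diag_mat th ** Th ** B ** transpose Th ** diag_mat th"
proof -
  define Phi where "Phi = diag_mat th ** Th"
  define om where "om = (\<chi> k. norm (phi_vec Th th k))"
  define Om_inv where "Om_inv = diag_mat (\<chi> k. inverse (om$k))"
  have "\<forall>k. om$k \<noteq> 0"
    using nonempty th_pos by (simp add: om_def phi_vec_nonzero)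
  then have inv: "diag_mat om ** Om_inv = mat 1" "Om_inv ** diag_mat om = mat 1"
    unfolding Om_inv_def by (simp_all add: diag_mat_mult_inverse)
  have Om: "Omega_mat Th th = diag_mat om" by (simp add: Omega_mat_def om_def)
  have sym: "transpose Om_inv = Om_inv" by (simp add: Om_inv_def transpose_diag_mat)
  have "transpose (Phi ** Om_inv) ** (Phi ** Om_inv) = Om_inv ** (transpose Phi ** Phi) ** Om_inv"
    by (simp add: sym matrix_transpose_mul matrix_mul_assoc)
  also have "\<dots> = (Om_inv ** diag_mat om) ** (diag_mat om ** Om_inv)"
    unfolding Phi_def transpose_mult_self_membership[OF memb] Om by (simp add: matrix_mul_assoc)
  finally have "transpose (Phi ** Om_inv) ** (Phi ** Om_inv) = mat 1"
    by (simp add: inv)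
  moreover have "(Phi ** Om_inv) ** Bbar Th th B ** transpose (Phi ** Om_inv)
      = Phi ** (Om_inv ** diag_mat om) ** B ** (diag_mat om ** Om_inv) ** transpose Phi"
    by (simp add: Bbar_def Om sym matrix_transpose_mul matrix_mul_assoc)
  then have "(Phi ** Om_inv) ** Bbar Th th B ** transpose (Phi ** Om_inv)
      = diag_mat th ** Th ** B ** transpose Th ** diag_mat th"
    by (simp add: inv Phi_def matrix_transpose_mul transpose_diag_mat matrix_mul_assoc)
  ultimately show ?thesis by blast
qed

lemma rank_le_rank_Bbar:
  assumes "\<forall>k. community Th k \<noteq> {}" and "\<forall>i. th$i > 0"
  shows "rank B \<le> rank (Bbar Th th B)"
proof -
  define om where "om = (\<chi> k. norm (phi_vec Th th k))"
  define Om_inv where "Om_inv = diag_mat (\<chi> k. inverse (om$k))"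
  have "\<forall>k. om$k \<noteq> 0"
    using assms by (simp add: om_def phi_vec_nonzero)
  then have inv: "diag_mat om ** Om_inv = mat 1" "Om_inv ** diag_mat om = mat 1"
    unfolding Om_inv_def by (simp_all add: diag_mat_mult_inverse)
  have "Om_inv ** Bbar Th th B ** Om_inv = (Om_inv ** diag_mat om) ** B ** (diag_mat om ** Om_inv)"
    by (simp add: Bbar_def Omega_mat_def om_def matrix_mul_assoc)
  then have "Om_inv ** Bbar Th th B ** Om_inv = B" by (simp add: inv)
  then show ?thesis by (metis order_trans rank_mul_le_left rank_mul_le_right)
qed

lemma Bbar_eigenvalue_nonzero:
  fixes H :: "real^'r^'K" and d :: "real^'r"
  assumes "\<forall>k. community Th k \<noteq> {}" and "\<forall>i. th$i > 0"
    and "rank B = CARD('r)" and "Bbar Th th B = H ** diag_mat d ** transpose H"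
  shows "d$i \<noteq> 0"
proof
  assume "d$i = 0"
  have "CARD('r) = rank B" using assms(3) by simp
  also have "\<dots> \<le> rank (Bbar Th th B)" by (rule rank_le_rank_Bbar[OF assms(1,2)])
  also have "\<dots> \<le> rank (diag_mat d)"
    unfolding assms(4) by (metis order_trans rank_mul_le_left rank_mul_le_right)
  finally show False using rank_diag_mat_less[OF \<open>d$i = 0\<close>] by simp
qed

theorem lemma4:
  fixes Th :: "real^'K^'n"
    and B :: "real^'K^'K"
    and th :: "real^'n"
    and U :: "real^'r^'n" and Sig :: "real^'r^'r"
    and H :: "real^'r^'K" and D :: "real^'r^'r"
    and eta' iota_lo iota_hi beta :: real
  assumes memb: "membership_matrix Th"
    and nonempty: "\<forall>k. community Th k \<noteq> {}"
    and B_sym: "transpose B = B"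
    and B_range: "\<forall>k l. 0 \<le> B$k$l \<and> B$k$l \<le> 1"
    and rankB: "rank B = CARD('r)"
    and rank_lt: "CARD('r) < CARD('K)"
    and th_pos: "\<forall>i. th$i > 0"
    and th_max: "\<forall>k. Max ((\<lambda>i. th$i) ` community Th k) = 1"
    and P_eig: "diag_mat th ** Th ** B ** transpose Th ** diag_mat th = U ** Sig ** transpose U"
    and U_orth: "transpose U ** U = mat 1"
    and Sig_diag: "is_diag Sig"
    and Bbar_eig: "Bbar Th th B = H ** D ** transpose H"
    and H_orth: "transpose H ** H = mat 1"
    and D_diag: "is_diag D"
    and pos: "eta' > 0" "iota_lo > 0" "iota_hi > 0" "beta > 0"
    and eta_bd: "\<forall>k l. k \<noteq> l \<longrightarrow>
        Bbar Th th B$k$k * Bbar Th th B$l$l - (Bbar Th th B$k$l)^2 \<ge> eta'"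
    and iota_bd: "\<forall>i. iota_lo < Sig$i$i \<and> Sig$i$i < iota_hi"
    and beta_bd: "\<forall>k. 0 < Bbar Th th B$k$k \<and> Bbar Th th B$k$k \<le> beta"
  shows "\<forall>k l. k \<noteq> l \<longrightarrow>
           cosine (H$k) (H$l) \<le> sqrt (1 - eta' / (iota_hi * beta^2 / iota_lo))"
proof -
  obtain d s where D: "D = diag_mat d" and Sig: "Sig = diag_mat s"
    using D_diag Sig_diag is_diag_eq_diag_mat by metis
  obtain Q where Q_orth: "transpose Q ** Q = mat 1"
    and compress: "Q ** Bbar Th th B ** transpose Q = U ** Sig ** transpose U"
    using Bbar_orthonormal_compression[OF memb nonempty th_pos] P_eig by metis
  have d_nonzero: "d$i \<noteq> 0" for i
    using Bbar_eigenvalue_nonzero[OF nonempty th_pos rankB] Bbar_eig D by blast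
  have d_bounds: "iota_lo \<le> d$i \<and> d$i \<le> iota_hi" for i
  proof -
    obtain j where "s$j = d$i"
      using eigenvalue_of_compressed_eigendecomposition[OF H_orth Q_orth U_orth _ d_nonzero]
        compress Bbar_eig D Sig by metis
    then show ?thesis using iota_bd[rule_format, of j] Sig by (simp add: diag_mat_def)
  qed
  have Bbar_nth: "Bbar Th th B $ k $ l = H$k \<bullet> (diag_mat d *v H$l)" for k l
    unfolding Bbar_eig D by (rule matrix_mult_transpose_nth)
  show ?thesis
  proof (intro allI impI)
    fix k l :: 'K
    assume "k \<noteq> l"
    show "cosine (H$k) (H$l) \<le> sqrt (1 - eta' / (iota_hi * beta^2 / iota_lo))"
      using eta_bd beta_bd \<open>k \<noteq> l\<close> pos d_bounds unfolding Bbar_nth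
      by (intro cosine_le_of_gram_det[where M = "diag_mat d"])
        (auto simp: transpose_diag_mat quadratic_form_diag_mat_lower quadratic_form_diag_mat_upper)
  qed
qed

end
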